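(* Consider the network and loss from the context with $\alpha^-=0$. Let $\overline{\mathbf{P}}$ be a stationary point of the loss of the network with hidden neurons $I$. Let $\overline{\mathbf{P}}'$ be obtained by adding a finite set $I^-$ of new hidden neurons $i^-$ with input weights $\mathbf{w}_{i^-}$ satisfying $\mathbf{w}_{i^-}\cdot\mathbf{x}_k<0$ for all $k\in K$ and arbitrary output weights $h_{ji^-}$ ($j\in J$), all other parameters unchanged. Then $\overline{\mathbf{P}}'$ is a stationary point of the loss of the widened network (with hidden neurons $I\cup I^-$).
   Context: Fix an integer $d>1$, finite index sets $I$ (hidden), $J$ (output), $K$ (samples), reals $\alpha^+\ne\alpha^-$, and $\rho(z)=\alpha^+z$ for $z\ge0$, $\rho(z)=\alpha^-z$ for $z<0$. For a network with finite hidden index set $\tilde I$, parameters $\mathbf{P}$ consist of $\mathbf{w}_i\in\mathbb{R}^d$ and $h_{ji}\in\mathbb{R}$ ($i\in\tilde I$, $j\in J$), output $\hat{\mathbf{y}}(\mathbf{P};\mathbf{x})_j=\sum_{i\in\tilde I}h_{ji}\rho(\mathbf{w}_i\cdot\mathbf{x})$, and loss $\mathcal{L}(\mathbf{P})=\frac12\sum_{k\in K}\|\hat{\mathbf{y}}(\mathbf{P};\mathbf{x}_k)-\mathbf{y}_k\|^2$ for training data $(\mathbf{x}_k,\mathbf{y}_k)_{k\in K}$. A point $\overline{\mathbf{P}}$ is a stationary point if $\lim_{\alpha\to0^+}\frac{\mathcal{L}(\overline{\mathbf{P}}+\alpha\mathbf{d})-\mathcal{L}(\overline{\mathbf{P}})}{\alpha}\ge0$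 for all directions $\mathbf{d}$ in parameter space. *)

theory Defs
  imports "HOL-Analysis.Analysis"
begin

definition rho :: "real \<Rightarrow> real \<Rightarrow> real \<Rightarrow> real" where
  "rho ap am z = (if z \<ge> 0 then ap * z else am * z)"

definition net_out :: "real \<Rightarrow> real \<Rightarrow> 'i set \<Rightarrow> ('i \<Rightarrow> real^'d) \<Rightarrow> ('j \<Rightarrow> 'i \<Rightarrow> real)
    \<Rightarrow> real^'d \<Rightarrow> 'j \<Rightarrow> real" where
  "net_out ap am Hid w h x j = (\<Sum>i\<in>Hid. h j i * rho ap am (w i \<bullet> x))"

definition loss :: "real \<Rightarrow> real \<Rightarrow> 'i set \<Rightarrow> 'j set \<Rightarrow> 'k set \<Rightarrow> ('k \<Rightarrow> real^'d)
    \<Rightarrow> ('k \<Rightarrow> 'j \<Rightarrow> real) \<Rightarrow> ('i \<Rightarrow> real^'d) \<Rightarrow> ('j \<Rightarrow> 'i \<Rightarrow> real) \<Rightarrow> real" where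
  "loss ap am Hid J K xs ys w h =
     (1/2) * (\<Sum>k\<in>K. \<Sum>j\<in>J. (net_out ap am Hid w h (xs k) j - ys k j)^2)"

text \<open>Directions are arbitrary perturbations of all
  parameters (only those indexed by Hid affect the loss).\<close>
definition stationary :: "real \<Rightarrow> real \<Rightarrow> 'i set \<Rightarrow> 'j set \<Rightarrow> 'k set \<Rightarrow> ('k \<Rightarrow> real^'d)
    \<Rightarrow> ('k \<Rightarrow> 'j \<Rightarrow> real) \<Rightarrow> ('i \<Rightarrow> real^'d) \<Rightarrow> ('j \<Rightarrow> 'i \<Rightarrow> real) \<Rightarrow> bool" where
  "stationary ap am Hid J K xs ys w h \<longleftrightarrow>
     (\<forall>(dw :: 'i \<Rightarrow> real^'d) (dh :: 'j \<Rightarrow> 'i \<Rightarrow> real). \<exists>L.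
        ((\<lambda>a. (loss ap am Hid J K xs ys (\<lambda>i. w i + a *\<^sub>R dw i) (\<lambda>j i. h j i + a * dh j i)
               - loss ap am Hid J K xs ys w h) / a) \<longlongrightarrow> L) (at_right 0) \<and> L \<ge> 0)"

end

theory Submission
  imports Defs
begin

text \<open>With \<open>\<alpha>\<^sup>- = 0\<close> a neuron whose input weight is negative on every sample contributes
  nothing, and it stays dead under all small perturbations of its weight, since the sign
  conditions are strict. Hence along every ray the loss of the widened network agrees, near
  \<open>0\<close>, with the loss of the original network along the restricted ray, so the one-sided
  directional derivatives of the two losses coincide.\<close>

lemma net_out_union_dead:
  assumes "finite I" "finite M" "I \<inter> M = {}" "\<forall>i\<in>M. W i \<bullet> x < 0"
  shows "net_out ap 0 (I \<union> M) W H x j = net_out ap 0 I W H x j"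
proof -
  have "(\<Sum>i\<in>M. H j i * rho ap 0 (W i \<bullet> x)) = 0"
    using assms(4) by (intro sum.neutral) (auto simp: rho_def)
  then show ?thesis
    unfolding net_out_def using assms(1-3) by (simp add: sum.union_disjoint)
qed

lemma loss_union_dead:
  assumes "finite I" "finite M" "I \<inter> M = {}" "\<forall>i\<in>M. \<forall>k\<in>K. W i \<bullet> xs k < 0"
  shows "loss ap 0 (I \<union> M) J K xs ys W H = loss ap 0 I J K xs ys W H"
  unfolding loss_def using assms by (simp add: net_out_union_dead)

lemma loss_cong:
  assumes "\<forall>i\<in>I. W i = V i" "\<forall>j\<in>J. \<forall>i\<in>I. H j i = G j i"
  shows "loss ap am I J K xs ys W H = loss ap am I J K xs ys V G"
  unfolding loss_def net_out_def using assms by (intro arg_cong[where f = "(*) _"] sum.cong) auto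

lemma eventually_nhds_negative_on_samples:
  assumes "\<forall>i\<in>M. \<forall>k\<in>K. W i \<bullet> xs k < 0" "finite M" "finite K"
  shows "eventually (\<lambda>a. \<forall>i\<in>M. \<forall>k\<in>K. (W i + a *\<^sub>R D i) \<bullet> xs k < 0) (nhds (0::real))"
proof (intro eventually_ball_finite ballI assms(2,3))
  fix i k assume "i \<in> M" "k \<in> K"
  have "((\<lambda>a. W i \<bullet> xs k + a * (D i \<bullet> xs k)) \<longlongrightarrow> W i \<bullet> xs k + 0 * (D i \<bullet> xs k)) (nhds 0)"
    by (intro tendsto_intros filterlim_ident)
  then have "eventually (\<lambda>a. W i \<bullet> xs k + a * (D i \<bullet> xs k) < 0) (nhds (0::real))"
    using assms(1) \<open>i \<in> M\<close> \<open>k \<in> K\<close> by (intro order_tendstoD(2)) auto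
  then show "eventually (\<lambda>a. (W i + a *\<^sub>R D i) \<bullet> xs k < 0) (nhds (0::real))"
    by (simp add: inner_add_left)
qed

lemma stationary_if_loss_eq_near_rays:
  fixes W w :: "'i \<Rightarrow> real^'d" and H h :: "'j \<Rightarrow> 'i \<Rightarrow> real"
  assumes "stationary ap am I J K xs ys w h"
    and "\<And>dw dh. eventually (\<lambda>a.
           loss ap am I' J K xs ys (\<lambda>i. W i + a *\<^sub>R dw i) (\<lambda>j i. H j i + a * dh j i)
         = loss ap am I J K xs ys (\<lambda>i. w i + a *\<^sub>R dw i) (\<lambda>j i. h j i + a * dh j i)) (nhds 0)"
  shows "stationary ap am I' J K xs ys W H"
  unfolding stationary_def
proof (intro allI)
  fix dw :: "'i \<Rightarrow> real^'d" and dh :: "'j \<Rightarrow> 'i \<Rightarrow> real"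
  let ?L' = "\<lambda>a. loss ap am I' J K xs ys (\<lambda>i. W i + a *\<^sub>R dw i) (\<lambda>j i. H j i + a * dh j i)"
  let ?L = "\<lambda>a. loss ap am I J K xs ys (\<lambda>i. w i + a *\<^sub>R dw i) (\<lambda>j i. h j i + a * dh j i)"
  have near: "eventually (\<lambda>a. ?L' a = ?L a) (nhds 0)"
    using assms(2) .
  then have "?L' 0 = ?L 0"
    by (rule eventually_nhds_x_imp_x)
  then have quot: "eventually (\<lambda>a. (?L a - ?L 0) / a = (?L' a - ?L' 0) / a) (at_right 0)"
    using near unfolding eventually_at_filter by (auto elim: eventually_mono)
  obtain L where L: "((\<lambda>a. (?L a - ?L 0) / a) \<longlongrightarrow> L) (at_right 0)" "L \<ge> 0"
    using assms(1) unfolding stationary_def by auto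
  have "((\<lambda>a. (?L' a - ?L' 0) / a) \<longlongrightarrow> L) (at_right 0)"
    using L(1) tendsto_cong[OF quot] by simp
  with L(2) show "\<exists>L. ((\<lambda>a. (?L' a - loss ap am I' J K xs ys W H) / a) \<longlongrightarrow> L) (at_right 0) \<and> L \<ge> 0"
    by auto
qed

theorem proposition5:
  fixes ap am :: real
    and I Im :: "'i set" and J :: "'j set" and K :: "'k set"
    and xs :: "'k \<Rightarrow> real^'d" and ys :: "'k \<Rightarrow> 'j \<Rightarrow> real"
    and w wm :: "'i \<Rightarrow> real^'d" and h hm :: "'j \<Rightarrow> 'i \<Rightarrow> real"
  assumes "CARD('d) > 1"
    and "finite I" and "finite J" and "finite K" and "finite Im"
    and "I \<inter> Im = {}"
    and "ap \<noteq> am" and "am = 0"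
    and "stationary ap am I J K xs ys w h"
    and "\<forall>i\<in>Im. \<forall>k\<in>K. wm i \<bullet> xs k < 0"
  shows "stationary ap am (I \<union> Im) J K xs ys
           (\<lambda>i. if i \<in> I then w i else wm i) (\<lambda>j i. if i \<in> I then h j i else hm j i)"
proof (rule stationary_if_loss_eq_near_rays[OF assms(9)])
  fix dw :: "'i \<Rightarrow> real^'d" and dh :: "'j \<Rightarrow> 'i \<Rightarrow> real"
  define W where "W a i = (if i \<in> I then w i else wm i) + a *\<^sub>R dw i" for a i
  define H where "H a j i = (if i \<in> I then h j i else hm j i) + a * dh j i" for a j i
  have "\<forall>i\<in>Im. \<forall>k\<in>K. (if i \<in> I then w i else wm i) \<bullet> xs k < 0"
    using assms(6,10) by auto
  then have "eventually (\<lambda>a. \<forall>i\<in>Im. \<forall>k\<in>K. W a i \<bullet> xs k < 0) (nhds 0)"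
    unfolding W_def using assms(5,4) by (rule eventually_nhds_negative_on_samples)
  then have "eventually (\<lambda>a. loss ap am (I \<union> Im) J K xs ys (W a) (H a)
      = loss ap am I J K xs ys (\<lambda>i. w i + a *\<^sub>R dw i) (\<lambda>j i. h j i + a * dh j i)) (nhds 0)"
  proof (rule eventually_mono)
    fix a assume "\<forall>i\<in>Im. \<forall>k\<in>K. W a i \<bullet> xs k < 0"
    then have "loss ap am (I \<union> Im) J K xs ys (W a) (H a) = loss ap am I J K xs ys (W a) (H a)"
      using assms(2,5,6,8) by (simp add: loss_union_dead)
    also have "\<dots> = loss ap am I J K xs ys (\<lambda>i. w i + a *\<^sub>R dw i) (\<lambda>j i. h j i + a * dh j i)"
      unfolding W_def H_def by (rule loss_cong) auto
    finally show "loss ap am (I \<union> Im) J K xs ys (W a) (H a)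
      = loss ap am I J K xs ys (\<lambda>i. w i + a *\<^sub>R dw i) (\<lambda>j i. h j i + a * dh j i)" .
  qed
  then show "eventually (\<lambda>a. loss ap am (I \<union> Im) J K xs ys
        (\<lambda>i. (if i \<in> I then w i else wm i) + a *\<^sub>R dw i)
        (\<lambda>j i. (if i \<in> I then h j i else hm j i) + a * dh j i)
      = loss ap am I J K xs ys (\<lambda>i. w i + a *\<^sub>R dw i) (\<lambda>j i. h j i + a * dh j i)) (nhds 0)"
    unfolding W_def H_def .
qed

end
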